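(* Let $Z\subseteq\mathbb{C}^g$ be a $\Lambda$-periodic analytic set, let $C\subseteq\mathbb{C}^g$ be an irreducible complex algebraic curve, and let $\tau\in\mathbb{C}^g$ with $C+\tau\subseteq Z$. Let $\phi$ be a linear branch of $C$, convergent for $|w|>R$, with direction $\alpha$. Let $K$ be a positive integer such that for every ball $B\subseteq\mathbb{C}^g$ of radius $1$ and all $w_0,w_1\in\mathbb{C}$, $\tau',\mu\in\mathbb{C}^g$, the condition $\#\big((\Gamma(\phi,\mu,w_0,w_1)+\tau')\cap Z\cap B\big)\ge K$ implies $\Gamma(\phi,\mu,w_0,w_1)+\tau'\subseteq Z$. Suppose $\lambda\in\Lambda$ satisfies $\|\beta-\lambda\|<(2K)^{-1}$ for some $\beta\in[\alpha]$. Then $C+\tau+[\lambda]\subseteq Z$.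
   Context: $\Lambda\subset\mathbb{C}^g$ is a lattice of rank $2g$; $Z$ is periodic if $Z+\Lambda=Z$; $Z$ is analytic if locally it is the common zero set of finitely many complex-analytic functions. $\|\cdot\|$ is the Euclidean norm on $\mathbb{C}^g$, and for $z\in\mathbb{C}^g\setminus\{0\}$, $[z]=\{wz:w\in\mathbb{C}\}$. A branch of an irreducible curve $C\subseteq\mathbb{C}^g$ is a choice of a coordinate index $i$ with $z_i$ non-constant on $C$ together with a $g$-tuple $\phi=(\phi_1(z_i),\dots,\phi_g(z_i))$ of algebraic Puiseux series in $z_i$, convergent for $|z_i|>R$, with $\phi(z_i)\in C$ for all $|z_i|>R$. The branch is linear if for every $j$, $\phi_j(z_i)=\alpha_jz_i+(\text{lower order terms})$ with $\alpha_j\in\mathbb{C}$; then $\alpha=(\alpha_1,\dots,\alpha_g)$ (which has $\alpha_i=1$) is its direction. For $w_0,w_1\in\mathbb{C}$, $\mu\in\mathbb{C}^g$, $\Gamma(\phi,\mu,w_0,w_1)$ is the Zariski closure in $\mathbb{C}^g$ of $\{(\phi_1(w_0+\kappa w_1)-\kappa\mu_1,\dots,\phi_g(w_0+\kappa w_1)-\kappa\mu_g): \kappa\in\mathbb{C},\ |w_0+\kappa w_1|>R\}$. *)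

theory Defs
  imports "HOL-Analysis.Analysis" "HOL-Computational_Algebra.Polynomial"
begin

definition is_lattice :: "(complex ^ 'g) set \<Rightarrow> bool" where
  "is_lattice L \<longleftrightarrow> (\<exists>V. independent V \<and> card V = 2 * CARD('g) \<and>
      L = {\<Sum>v\<in>V. real_of_int (n v) *\<^sub>R v | n. True})"

definition periodic_set :: "(complex ^ 'g) set \<Rightarrow> (complex ^ 'g) set \<Rightarrow> bool" where
  "periodic_set L Z \<longleftrightarrow> {z + l | z l. z \<in> Z \<and> l \<in> L} = Z"

text \<open>Holomorphic functions of several complex variables: complex-linear Frechet derivative.\<close>
definition holo_on :: "(complex ^ 'g) set \<Rightarrow> (complex ^ 'g \<Rightarrow> complex) \<Rightarrow> bool" where
  "holo_on U f \<longleftrightarrow> (\<forall>z\<in>U. \<exists>f'. (f has_derivative f') (at z) \<and>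
      (\<forall>c v. f' (c *s v) = c * f' v))"

definition analytic_set :: "(complex ^ 'g) set \<Rightarrow> bool" where
  "analytic_set Z \<longleftrightarrow> (\<forall>p. \<exists>U F. open U \<and> p \<in> U \<and> finite F \<and> (\<forall>f\<in>F. holo_on U f) \<and>
      Z \<inter> U = {z\<in>U. \<forall>f\<in>F. f z = 0})"

inductive_set poly_funs :: "(complex ^ 'g \<Rightarrow> complex) set" where
  pf_const: "(\<lambda>z. c) \<in> poly_funs"
| pf_coord: "(\<lambda>z. z $ i) \<in> poly_funs"
| pf_add: "p \<in> poly_funs \<Longrightarrow> q \<in> poly_funs \<Longrightarrow> (\<lambda>z. p z + q z) \<in> poly_funs"
| pf_mult: "p \<in> poly_funs \<Longrightarrow> q \<in> poly_funs \<Longrightarrow> (\<lambda>z. p z * q z) \<in> poly_funs"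

definition algebraic_set :: "(complex ^ 'g) set \<Rightarrow> bool" where
  "algebraic_set A \<longleftrightarrow> (\<exists>F. finite F \<and> F \<subseteq> poly_funs \<and> A = {z. \<forall>f\<in>F. f z = 0})"

definition zariski_closure :: "(complex ^ 'g) set \<Rightarrow> (complex ^ 'g) set" where
  "zariski_closure S = {z. \<forall>p\<in>poly_funs. (\<forall>s\<in>S. p s = 0) \<longrightarrow> p z = 0}"

definition irreducible_alg :: "(complex ^ 'g) set \<Rightarrow> bool" where
  "irreducible_alg A \<longleftrightarrow> A \<noteq> {} \<and> algebraic_set A \<and>
     \<not> (\<exists>A1 A2. algebraic_set A1 \<and> algebraic_set A2 \<and> A = A1 \<union> A2 \<and> A1 \<noteq> A \<and> A2 \<noteq> A)"

text \<open>Irreducible algebraic curve: irreducible algebraic set of (Krull) dimension 1, i.e. the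
  longest chain of irreducible algebraic subsets ending at C has length 1.\<close>
definition irreducible_curve :: "(complex ^ 'g) set \<Rightarrow> bool" where
  "irreducible_curve C \<longleftrightarrow> irreducible_alg C \<and>
     (\<exists>Y. irreducible_alg Y \<and> Y \<subset> C) \<and>
     (\<forall>Y. irreducible_alg Y \<and> Y \<subset> C \<longrightarrow> \<not> (\<exists>W. irreducible_alg W \<and> W \<subset> Y))"

text \<open>Puiseux series at infinity: a Laurent series in s = t^(1/N) (principal root) with
  finitely many positive powers; a k is the coefficient of s^k.\<close>
definition puiseux_val :: "nat \<Rightarrow> (int \<Rightarrow> complex) \<Rightarrow> complex \<Rightarrow> complex" where
  "puiseux_val N a t = infsum (\<lambda>k. a k * (t powr (1 / of_nat N)) powi k) UNIV"

definition branch_fun :: "nat \<Rightarrow> ('g \<Rightarrow> int \<Rightarrow> complex) \<Rightarrow> complex \<Rightarrow> complex ^ 'g" where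
  "branch_fun N a t = (\<chi> j. puiseux_val N (a j) t)"

text \<open>A branch of C in the coordinate z_i, convergent for |z_i| > R.\<close>
definition is_branch :: "(complex ^ 'g) set \<Rightarrow> 'g \<Rightarrow> nat \<Rightarrow> ('g \<Rightarrow> int \<Rightarrow> complex) \<Rightarrow> real \<Rightarrow> bool" where
  "is_branch C i N a R \<longleftrightarrow> 0 \<le> R \<and> 0 < N \<and>
     (\<exists>c\<in>C. \<exists>d\<in>C. c $ i \<noteq> d $ i) \<and>
     (\<forall>j. \<exists>M. \<forall>k>M. a j k = 0) \<and>
     (\<forall>j s. R < norm s ^ N \<longrightarrow> (\<lambda>k. a j k * s powi k) summable_on UNIV) \<and>
     (\<forall>j. \<exists>P :: complex poly poly. P \<noteq> 0 \<and>
         (\<forall>t. R < norm t \<longrightarrow> poly (poly P [:puiseux_val N (a j) t:]) t = 0)) \<and>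
     (\<forall>t. R < norm t \<longrightarrow> branch_fun N a t $ i = t) \<and>
     (\<forall>t. R < norm t \<longrightarrow> branch_fun N a t \<in> C)"

text \<open>Linear branch: all exponents of t are at most 1 (exponent of s at most N).\<close>
definition linear_branch :: "nat \<Rightarrow> ('g \<Rightarrow> int \<Rightarrow> complex) \<Rightarrow> bool" where
  "linear_branch N a \<longleftrightarrow> (\<forall>j k. int N < k \<longrightarrow> a j k = 0)"

definition branch_direction :: "nat \<Rightarrow> ('g \<Rightarrow> int \<Rightarrow> complex) \<Rightarrow> complex ^ 'g" where
  "branch_direction N a = (\<chi> j. a j (int N))"

definition Gamma_set :: "nat \<Rightarrow> ('g \<Rightarrow> int \<Rightarrow> complex) \<Rightarrow> real \<Rightarrow> complex ^ 'g
    \<Rightarrow> complex \<Rightarrow> complex \<Rightarrow> (complex ^ 'g) set" where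
  "Gamma_set N a R \<mu> w0 w1 = zariski_closure
     {branch_fun N a (w0 + \<kappa> * w1) - \<kappa> *s \<mu> | \<kappa>. R < norm (w0 + \<kappa> * w1)}"

end

theory Submission
  imports Defs "HOL-Library.Function_Algebras" "HOL-Real_Asymp.Real_Asymp"
begin

text \<open>
  Choose w with |w\<alpha> - \<lambda>| < 1/(2K), w \<noteq> 0, w \<noteq> \<lambda>_i.  Because the branch \<phi> is linear,
  \<phi>((x+n)w) - \<phi>(xw) = n w \<alpha> + o(1) along the ray, so for large x the K points
  \<phi>((x+n)w) - n\<lambda> + \<tau> (n < K) of \<Gamma>(\<phi>,\<lambda>,xw,w) + \<tau> lie in Z and in one unit ball; rigidity
  puts this whole translate into Z.  Varying x, the points \<phi>(t) + \<tau> + \<kappa>\<lambda> fill a segment of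
  a line, so each line \<phi>(t) + \<tau> + C\<lambda> lies in Z (rigidity with w_1 = 0).  Finally, for fixed
  \<kappa>, uncountably many points \<phi>(t) + \<tau> + \<kappa>\<lambda> lie in \<Gamma>(\<phi>,0,0,1) + \<tau> + \<kappa>\<lambda> \<inter> Z, and
  \<Gamma>(\<phi>,0,0,1) \<supseteq> C because infinite subsets of an irreducible curve are Zariski dense.
\<close>

section \<open>Noetherian subrings and the Hilbert basis theorem\<close>

definition subring_set :: "'a::comm_ring_1 set \<Rightarrow> bool" where
  "subring_set R \<longleftrightarrow> 0 \<in> R \<and> 1 \<in> R \<and> (\<forall>x\<in>R. \<forall>y\<in>R. x + y \<in> R \<and> x * y \<in> R \<and> - x \<in> R)"

definition ideal_of :: "'a::comm_ring_1 set \<Rightarrow> 'a set \<Rightarrow> bool" where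
  "ideal_of R I \<longleftrightarrow> I \<subseteq> R \<and> 0 \<in> I \<and> (\<forall>f\<in>I. \<forall>g\<in>I. f + g \<in> I) \<and> (\<forall>h\<in>R. \<forall>f\<in>I. h * f \<in> I)"

definition ideal_span :: "'a::comm_ring_1 set \<Rightarrow> 'a set \<Rightarrow> 'a set" where
  "ideal_span R F = {\<Sum>g\<in>F. h g * g | h. \<forall>g\<in>F. h g \<in> R}"

definition noetherian_subring :: "'a::comm_ring_1 set \<Rightarrow> bool" where
  "noetherian_subring R \<longleftrightarrow> (\<forall>I. ideal_of R I \<longrightarrow> (\<exists>F. finite F \<and> F \<subseteq> I \<and> I \<subseteq> ideal_span R F))"

lemma subring_sum: "subring_set R \<Longrightarrow> (\<And>x. x \<in> A \<Longrightarrow> f x \<in> R) \<Longrightarrow> sum f A \<in> R"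
  by (induction A rule: infinite_finite_induct) (auto simp: subring_set_def)

lemma ideal_sum: "ideal_of R I \<Longrightarrow> (\<And>x. x \<in> A \<Longrightarrow> f x \<in> I) \<Longrightarrow> sum f A \<in> I"
  by (induction A rule: infinite_finite_induct) (auto simp: ideal_of_def)

lemma ideal_diff:
  assumes "subring_set R" "ideal_of R I" "f \<in> I" "g \<in> I"
  shows "f - g \<in> I"
proof -
  have "- 1 \<in> R" using assms(1) unfolding subring_set_def by blast
  then have "(- 1) * g \<in> I" using assms(2,4) unfolding ideal_of_def by blast
  then have "- g \<in> I" by simp
  then show ?thesis using assms(2,3) by (auto simp: ideal_of_def)
qed

lemma ideal_span_subset: "ideal_of R I \<Longrightarrow> F \<subseteq> I \<Longrightarrow> ideal_span R F \<subseteq> I"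
  unfolding ideal_span_def by (auto intro!: ideal_sum) (auto simp: ideal_of_def)

lemma ideal_span_ideal:
  assumes R: "subring_set R" and F: "finite F" "F \<subseteq> R"
  shows "ideal_of R (ideal_span R F)" and "F \<subseteq> ideal_span R F"
proof -
  have R0: "0 \<in> R" and R1: "1 \<in> R" and Radd: "\<And>x y. x \<in> R \<Longrightarrow> y \<in> R \<Longrightarrow> x + y \<in> R"
    and Rmult: "\<And>x y. x \<in> R \<Longrightarrow> y \<in> R \<Longrightarrow> x * y \<in> R"
    using R by (auto simp: subring_set_def)
  have unit: "(\<Sum>g'\<in>F. (if g' = g then r else 0) * g') = r * g" if "g \<in> F" for g r
  proof -
    have "(\<Sum>g'\<in>F. (if g' = g then r else 0) * g') = (\<Sum>g'\<in>F. if g' = g then r * g else 0)"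
      by (rule sum.cong) auto
    then show ?thesis using that F(1) by simp
  qed
  show "F \<subseteq> ideal_span R F"
  proof
    fix g assume "g \<in> F"
    then show "g \<in> ideal_span R F" unfolding ideal_span_def using unit[of g 1] R0 R1
      by (intro CollectI exI[where x="\<lambda>g'. if g' = g then 1 else 0"]) auto
  qed
  show "ideal_of R (ideal_span R F)"
    unfolding ideal_of_def
  proof (intro conjI ballI)
    show "ideal_span R F \<subseteq> R"
      using F(2) by (auto simp: ideal_span_def intro!: subring_sum[OF R] Rmult)
    show "0 \<in> ideal_span R F"
      unfolding ideal_span_def using R0 by (auto intro!: exI[where x="\<lambda>_. 0"])
  next
    fix f g assume "f \<in> ideal_span R F" "g \<in> ideal_span R F"
    then obtain h k where "\<forall>x\<in>F. h x \<in> R" "f = (\<Sum>x\<in>F. h x * x)"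
      "\<forall>x\<in>F. k x \<in> R" "g = (\<Sum>x\<in>F. k x * x)" by (auto simp: ideal_span_def)
    then show "f + g \<in> ideal_span R F" unfolding ideal_span_def
      by (intro CollectI exI[where x="\<lambda>x. h x + k x"])
         (auto simp: sum.distrib distrib_right intro: Radd)
  next
    fix r f assume "r \<in> R" "f \<in> ideal_span R F"
    then obtain h where "\<forall>x\<in>F. h x \<in> R" "f = (\<Sum>x\<in>F. h x * x)" by (auto simp: ideal_span_def)
    then show "r * f \<in> ideal_span R F" unfolding ideal_span_def using \<open>r \<in> R\<close>
      by (intro CollectI exI[where x="\<lambda>x. r * h x"]) (auto simp: sum_distrib_left mult.assoc intro: Rmult)
  qed
qed

lemma noetherian_if_field:
  assumes R: "subring_set R" and inv: "\<And>x. x \<in> R \<Longrightarrow> x \<noteq> 0 \<Longrightarrow> \<exists>y\<in>R. y * x = 1"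
  shows "noetherian_subring R"
  unfolding noetherian_subring_def
proof (intro allI impI)
  fix I assume I: "ideal_of R I"
  show "\<exists>F. finite F \<and> F \<subseteq> I \<and> I \<subseteq> ideal_span R F"
  proof (cases "I \<subseteq> {0}")
    case True
    then show ?thesis by (intro exI[where x="{}"]) (auto simp: ideal_span_def)
  next
    case False
    then obtain f where f: "f \<in> I" "f \<noteq> 0" by auto
    have "f \<in> R" using I f by (auto simp: ideal_of_def)
    then obtain y where y: "y \<in> R" "y * f = 1" using inv f(2) by blast
    have "g \<in> ideal_span R {f}" if "g \<in> I" for g
    proof -
      have "g * y \<in> R" using that y I R by (auto simp: ideal_of_def subring_set_def)
      moreover have "g = (g * y) * f" using y by (simp add: mult.assoc)
      ultimately show ?thesis unfolding ideal_span_def by auto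
    qed
    then show ?thesis using f by (intro exI[where x="{f}"]) auto
  qed
qed

lemma noetherian_hom_image:
  assumes N: "noetherian_subring R'" and R': "subring_set R'"
    and add: "\<And>x y. x \<in> R' \<Longrightarrow> y \<in> R' \<Longrightarrow> h (x + y) = h x + h y"
    and mult: "\<And>x y. x \<in> R' \<Longrightarrow> y \<in> R' \<Longrightarrow> h (x * y) = h x * h y"
    and surj: "h ` R' = R"
  shows "noetherian_subring R"
  unfolding noetherian_subring_def
proof (intro allI impI)
  fix I assume I: "ideal_of R I"
  have h0: "h 0 = 0" using add[of 0 0] R' by (auto simp: subring_set_def)
  have hsum: "h (sum f A) = (\<Sum>x\<in>A. h (f x))" if "\<And>x. x \<in> A \<Longrightarrow> f x \<in> R'" for f and A :: "'c set"
    using that by (induction A rule: infinite_finite_induct) (auto simp: h0 add subring_sum[OF R'])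
  define J where "J = {p \<in> R'. h p \<in> I}"
  have "ideal_of R' J"
    using I R' surj by (auto simp: ideal_of_def J_def h0 add mult subring_set_def)
  then obtain G where G: "finite G" "G \<subseteq> J" "J \<subseteq> ideal_span R' G"
    using N by (auto simp: noetherian_subring_def)
  have "f \<in> ideal_span R (h ` G)" if f: "f \<in> I" for f
  proof -
    obtain p where p: "p \<in> R'" "h p = f" using f I surj by (auto simp: ideal_of_def)
    then have "p \<in> ideal_span R' G" using f G(3) by (auto simp: J_def)
    then obtain r where r: "\<forall>q\<in>G. r q \<in> R'" "p = (\<Sum>q\<in>G. r q * q)" by (auto simp: ideal_span_def)
    have GR': "G \<subseteq> R'" using G(2) by (auto simp: J_def)
    have "f = (\<Sum>q\<in>G. h (r q * q))"
      using p r GR' R' by (auto simp: subring_set_def intro!: hsum)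
    also have "\<dots> = (\<Sum>q\<in>G. h (r q) * h q)"
      using r(1) GR' by (auto intro!: sum.cong mult)
    also have "\<dots> = (\<Sum>g\<in>h ` G. (\<Sum>q\<in>{q\<in>G. h q = g}. h (r q)) * g)"
      by (subst sum.image_gen[OF G(1), of _ h]) (auto simp: sum_distrib_right intro!: sum.cong)
    moreover have "(\<Sum>q\<in>{q\<in>G. h q = g}. h (r q)) \<in> R" for g
    proof -
      have "(\<Sum>q\<in>{q\<in>G. h q = g}. h (r q)) = h (\<Sum>q\<in>{q\<in>G. h q = g}. r q)"
        using r(1) by (intro hsum[symmetric]) auto
      moreover have "(\<Sum>q\<in>{q\<in>G. h q = g}. r q) \<in> R'" using r(1) by (intro subring_sum[OF R']) auto
      ultimately show ?thesis using surj by auto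
    qed
    ultimately show ?thesis unfolding ideal_span_def by auto
  qed
  then show "\<exists>F. finite F \<and> F \<subseteq> I \<and> I \<subseteq> ideal_span R F"
    using G by (intro exI[where x="h ` G"]) (auto simp: J_def)
qed

definition coeff_polys :: "'a::comm_ring_1 set \<Rightarrow> 'a poly set" where
  "coeff_polys R = {p. \<forall>k. coeff p k \<in> R}"

lemma subring_coeff_polys:
  assumes R: "subring_set R"
  shows "subring_set (coeff_polys R)"
proof -
  have mult: "coeff (p * q) k \<in> R" if "p \<in> coeff_polys R" "q \<in> coeff_polys R" for p q k
    using R that by (intro coeff_mult_semiring_closed[of R]) (auto simp: subring_set_def coeff_polys_def)
  show ?thesis
    using R mult by (auto simp: subring_set_def coeff_polys_def coeff_1)
qed

lemma monom_coeff_polys: "subring_set R \<Longrightarrow> r \<in> R \<Longrightarrow> monom r k \<in> coeff_polys R"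
  by (auto simp: coeff_polys_def coeff_monom subring_set_def)

definition lead_ideal :: "'a::comm_ring_1 poly set \<Rightarrow> nat \<Rightarrow> 'a set" where
  "lead_ideal J d = {coeff p d | p. p \<in> J \<and> degree p \<le> d}"

lemma lead_ideal_ideal:
  assumes R: "subring_set R" and J: "ideal_of (coeff_polys R) J"
  shows "ideal_of R (lead_ideal J d)"
  unfolding ideal_of_def
proof (intro conjI ballI)
  show "lead_ideal J d \<subseteq> R" using J by (auto simp: lead_ideal_def ideal_of_def coeff_polys_def)
  show "0 \<in> lead_ideal J d" using J unfolding lead_ideal_def ideal_of_def by force
next
  fix f g assume "f \<in> lead_ideal J d" "g \<in> lead_ideal J d"
  then obtain p q where "p \<in> J" "degree p \<le> d" "f = coeff p d" "q \<in> J" "degree q \<le> d" "g = coeff q d"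
    by (auto simp: lead_ideal_def)
  then show "f + g \<in> lead_ideal J d" unfolding lead_ideal_def using J
    by (intro CollectI exI[where x="p + q"]) (auto simp: ideal_of_def intro: degree_add_le)
next
  fix h f assume h: "h \<in> R" and "f \<in> lead_ideal J d"
  then obtain p where p: "p \<in> J" "degree p \<le> d" "f = coeff p d" by (auto simp: lead_ideal_def)
  have "monom h 0 * p \<in> J" using J monom_coeff_polys[OF R h] p(1) by (auto simp: ideal_of_def)
  moreover have "degree (monom h 0 * p) \<le> d" using p(2) degree_smult_le[of h p] by (simp add: monom_0)
  ultimately show "h * f \<in> lead_ideal J d" unfolding lead_ideal_def using p(3)
    by (intro CollectI exI[where x="monom h 0 * p"]) (simp add: monom_0)
qed

text \<open>Multiplying by the variable shows that the leading ideals increase with the degree.\<close>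
lemma lead_ideal_mono:
  assumes R: "subring_set R" and J: "ideal_of (coeff_polys R) J" and "d \<le> e"
  shows "lead_ideal J d \<subseteq> lead_ideal J e"
proof -
  have "lead_ideal J d \<subseteq> lead_ideal J (Suc d)" for d
  proof
    fix f assume "f \<in> lead_ideal J d"
    then obtain p where p: "p \<in> J" "degree p \<le> d" "f = coeff p d" by (auto simp: lead_ideal_def)
    have "monom 1 1 * p \<in> J"
      using J monom_coeff_polys[OF R, of 1 1] R p(1) by (auto simp: ideal_of_def subring_set_def)
    moreover have "monom 1 1 * p = pCons 0 p" by (simp add: monom_Suc monom_0)
    ultimately show "f \<in> lead_ideal J (Suc d)" unfolding lead_ideal_def using p degree_pCons_le[of 0 p]
      by (intro CollectI exI[where x="pCons 0 p"]) auto
  qed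
  then show ?thesis using lift_Suc_mono_le[of "lead_ideal J"] assms(3) by blast
qed

lemma lead_ideal_stable:
  assumes N: "noetherian_subring R" and R: "subring_set R" and J: "ideal_of (coeff_polys R) J"
  shows "\<exists>m. \<forall>d. lead_ideal J d \<subseteq> lead_ideal J m"
proof -
  note mono = lead_ideal_mono[OF R J]
  define U where "U = (\<Union>d. lead_ideal J d)"
  have "ideal_of R U"
    unfolding ideal_of_def
  proof (intro conjI ballI)
    show "U \<subseteq> R" "0 \<in> U" using lead_ideal_ideal[OF R J] unfolding U_def ideal_of_def by blast+
  next
    fix f g assume "f \<in> U" "g \<in> U"
    then obtain d e where "f \<in> lead_ideal J d" "g \<in> lead_ideal J e" by (auto simp: U_def)
    then have "f \<in> lead_ideal J (max d e)" "g \<in> lead_ideal J (max d e)"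
      using mono[of d "max d e"] mono[of e "max d e"] by auto
    then show "f + g \<in> U" using lead_ideal_ideal[OF R J, of "max d e"] by (auto simp: U_def ideal_of_def)
  next
    fix h f assume "h \<in> R" "f \<in> U"
    then show "h * f \<in> U" using lead_ideal_ideal[OF R J] unfolding U_def ideal_of_def by blast
  qed
  then obtain F where F: "finite F" "F \<subseteq> U" "U \<subseteq> ideal_span R F"
    using N by (auto simp: noetherian_subring_def)
  then obtain dd where dd: "\<forall>f\<in>F. f \<in> lead_ideal J (dd f)" unfolding U_def by (metis UN_iff subsetD)
  define m where "m = Max (insert 0 (dd ` F))"
  have "F \<subseteq> lead_ideal J m"
  proof
    fix f assume "f \<in> F"
    then have "dd f \<le> m" unfolding m_def using F(1) by (auto intro: Max_ge)
    then show "f \<in> lead_ideal J m" using dd \<open>f \<in> F\<close> mono by blast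
  qed
  then have "U \<subseteq> lead_ideal J m"
    using F(3) ideal_span_subset[OF lead_ideal_ideal[OF R J]] by blast
  then show ?thesis by (auto simp: U_def)
qed

text \<open>If every leading coefficient of a member of J is matched by a member of the span of
  G of no larger degree, then G generates J: subtract and induct on the degree.\<close>
lemma ideal_generated_by_leading:
  assumes R: "subring_set R" and J: "ideal_of (coeff_polys R) J" and G: "finite G" "G \<subseteq> J"
    and cover: "\<And>p n. p \<in> J \<Longrightarrow> degree p \<le> n \<Longrightarrow>
       \<exists>q\<in>ideal_span (coeff_polys R) G. degree q \<le> n \<and> coeff q n = coeff p n"
  shows "J \<subseteq> ideal_span (coeff_polys R) G"
proof -
  let ?S = "ideal_span (coeff_polys R) G"
  have RP: "subring_set (coeff_polys R)" by (rule subring_coeff_polys[OF R])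
  have GP: "G \<subseteq> coeff_polys R" using G(2) J by (auto simp: ideal_of_def)
  have S: "ideal_of (coeff_polys R) ?S" and "?S \<subseteq> J"
    using ideal_span_ideal[OF RP G(1) GP] ideal_span_subset[OF J G(2)] by auto
  have "\<forall>p. p \<in> J \<longrightarrow> degree p \<le> n \<longrightarrow> p \<in> ?S" for n
  proof (induction n)
    case 0
    show ?case
    proof (intro allI impI)
      fix p assume p: "p \<in> J" "degree p \<le> 0"
      then obtain q where q: "q \<in> ?S" "degree q \<le> 0" "coeff q 0 = coeff p 0" using cover by blast
      then have "p = q" using p(2) by (metis degree_0_id le_zero_eq)
      then show "p \<in> ?S" using q(1) by simp
    qed
  next
    case (Suc n)
    show ?case
    proof (intro allI impI)
      fix p assume p: "p \<in> J" "degree p \<le> Suc n"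
      then obtain q where q: "q \<in> ?S" "degree q \<le> Suc n" "coeff q (Suc n) = coeff p (Suc n)"
        using cover by blast
      have "p - q \<in> J" using ideal_diff[OF RP J p(1)] q(1) \<open>?S \<subseteq> J\<close> by blast
      moreover have "degree (p - q) \<le> n"
      proof (rule ccontr)
        assume "\<not> ?thesis"
        then have "degree (p - q) = Suc n" using degree_diff_le[OF p(2) q(2)] by simp
        moreover have "coeff (p - q) (Suc n) = 0" using q(3) by simp
        ultimately show False by (metis leading_coeff_0_iff degree_0 nat.distinct(1))
      qed
      ultimately have "p - q \<in> ?S" using Suc by blast
      then have "(p - q) + q \<in> ?S" using q(1) S unfolding ideal_of_def by blast
      then show "p \<in> ?S" by simp
    qed
  qed
  then show ?thesis by blast
qed

text \<open>A combination of leading coefficients of lower-degree members of an ideal is itself a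
  leading coefficient: multiply those members by suitable powers of the variable.\<close>
lemma shifted_combination:
  assumes R: "subring_set R" and S: "ideal_of (coeff_polys R) S" and F: "finite F" and en: "e \<le> n"
    and P: "\<And>f. f \<in> F \<Longrightarrow> P f \<in> S \<and> degree (P f) \<le> e \<and> coeff (P f) e = f"
    and h: "\<And>f. f \<in> F \<Longrightarrow> h f \<in> R"
  shows "\<exists>q\<in>S. degree q \<le> n \<and> coeff q n = (\<Sum>f\<in>F. h f * f)"
proof -
  define q where "q = (\<Sum>f\<in>F. monom (h f) (n - e) * P f)"
  have "q \<in> S" unfolding q_def
    using S monom_coeff_polys[OF R] h P by (intro ideal_sum[OF S]) (auto simp: ideal_of_def)
  moreover have "degree q \<le> n" unfolding q_def
  proof (rule degree_sum_le[OF F])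
    fix f assume "f \<in> F"
    then have "degree (P f) \<le> e" using P by blast
    then show "degree (monom (h f) (n - e) * P f) \<le> n"
      using degree_mult_le[of "monom (h f) (n - e)" "P f"] degree_monom_le[of "h f" "n - e"] en
      by linarith
  qed
  moreover have "coeff q n = (\<Sum>f\<in>F. h f * f)"
    unfolding q_def coeff_sum
  proof (rule sum.cong)
    fix f assume "f \<in> F"
    then have "coeff (P f) e = f" using P by blast
    then show "coeff (monom (h f) (n - e) * P f) n = h f * f"
      using en by (simp add: coeff_monom_mult)
  qed simp
  ultimately show ?thesis by blast
qed

text \<open>Finitely many members of J, whose leading coefficients generate the leading ideals
  up to the stable degree, match every leading coefficient occurring in J.\<close>
lemma leading_generators:
  assumes N: "noetherian_subring R" and R: "subring_set R" and J: "ideal_of (coeff_polys R) J"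
  shows "\<exists>G. finite G \<and> G \<subseteq> J \<and> (\<forall>p n. p \<in> J \<longrightarrow> degree p \<le> n \<longrightarrow>
           (\<exists>q\<in>ideal_span (coeff_polys R) G. degree q \<le> n \<and> coeff q n = coeff p n))"
proof -
  have RP: "subring_set (coeff_polys R)" by (rule subring_coeff_polys[OF R])
  obtain m where m: "\<And>d. lead_ideal J d \<subseteq> lead_ideal J m" using lead_ideal_stable[OF N R J] by blast
  have "\<forall>d. \<exists>F. finite F \<and> F \<subseteq> lead_ideal J d \<and> lead_ideal J d \<subseteq> ideal_span R F"
    using N lead_ideal_ideal[OF R J] unfolding noetherian_subring_def by blast
  then obtain FF where FF: "\<And>d. finite (FF d)" "\<And>d. FF d \<subseteq> lead_ideal J d"
      "\<And>d. lead_ideal J d \<subseteq> ideal_span R (FF d)"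
    by metis
  have "\<forall>d f. \<exists>p. f \<in> FF d \<longrightarrow> p \<in> J \<and> degree p \<le> d \<and> coeff p d = f"
    using FF(2) by (auto simp: lead_ideal_def)
  then obtain P where P: "\<And>d f. f \<in> FF d \<Longrightarrow> P d f \<in> J \<and> degree (P d f) \<le> d \<and> coeff (P d f) d = f"
    by metis
  define G where "G = (\<Union>d\<le>m. P d ` FF d)"
  have G: "finite G" "G \<subseteq> J" unfolding G_def using FF(1) P by blast+
  let ?S = "ideal_span (coeff_polys R) G"
  have "G \<subseteq> coeff_polys R" using G(2) J by (auto simp: ideal_of_def)
  then have S: "ideal_of (coeff_polys R) ?S" "G \<subseteq> ?S" using ideal_span_ideal[OF RP G(1)] by blast+
  have "\<exists>q\<in>?S. degree q \<le> n \<and> coeff q n = coeff p n" if p: "p \<in> J" "degree p \<le> n" for p n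
  proof -
    define e where "e = min n m"
    have en: "e \<le> n" "e \<le> m" by (auto simp: e_def)
    have "coeff p n \<in> lead_ideal J n" using p by (auto simp: lead_ideal_def)
    then have "coeff p n \<in> lead_ideal J e" using m[of n] by (cases "n \<le> m") (auto simp: e_def min_def)
    then have "coeff p n \<in> ideal_span R (FF e)" using FF(3) by blast
    then obtain h where h: "\<forall>f\<in>FF e. h f \<in> R" "coeff p n = (\<Sum>f\<in>FF e. h f * f)"
      unfolding ideal_span_def by blast
    have "\<And>f. f \<in> FF e \<Longrightarrow> P e f \<in> ?S \<and> degree (P e f) \<le> e \<and> coeff (P e f) e = f"
      using P en S(2) unfolding G_def by blast
    then show ?thesis
      using shifted_combination[OF R S(1) FF(1) en(1), where P="P e" and h=h] h by auto
  qed
  then show ?thesis using G by blast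
qed

theorem hilbert_basis:
  assumes N: "noetherian_subring R" and R: "subring_set R"
  shows "noetherian_subring (coeff_polys R)"
  unfolding noetherian_subring_def
proof (intro allI impI)
  fix J assume J: "ideal_of (coeff_polys R) J"
  obtain G where G: "finite G" "G \<subseteq> J" and cover: "\<forall>p n. p \<in> J \<longrightarrow> degree p \<le> n \<longrightarrow>
      (\<exists>q\<in>ideal_span (coeff_polys R) G. degree q \<le> n \<and> coeff q n = coeff p n)"
    using leading_generators[OF N R J] by blast
  have "J \<subseteq> ideal_span (coeff_polys R) G"
    by (rule ideal_generated_by_leading[OF R J G]) (use cover in blast)
  then show "\<exists>G. finite G \<and> G \<subseteq> J \<and> J \<subseteq> ideal_span (coeff_polys R) G"
    using G by blast
qed

section \<open>Polynomial functions on C^g form a Noetherian ring\<close>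

inductive_set poly_funs_in :: "('g::finite) set \<Rightarrow> (complex ^ 'g \<Rightarrow> complex) set" for S :: "'g set" where
  const: "(\<lambda>z. c) \<in> poly_funs_in S"
| coord: "i \<in> S \<Longrightarrow> (\<lambda>z. z $ i) \<in> poly_funs_in S"
| add: "p \<in> poly_funs_in S \<Longrightarrow> q \<in> poly_funs_in S \<Longrightarrow> p + q \<in> poly_funs_in S"
| mult: "p \<in> poly_funs_in S \<Longrightarrow> q \<in> poly_funs_in S \<Longrightarrow> p * q \<in> poly_funs_in S"

lemma subring_poly_funs_in: "subring_set (poly_funs_in S)"
proof -
  have "(\<lambda>z. c) \<in> poly_funs_in S" for c :: complex by (rule poly_funs_in.const)
  from this[of 0] this[of 1] this[of "-1"] have "0 \<in> poly_funs_in S" "1 \<in> poly_funs_in S"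
    and "(\<lambda>z. -1) \<in> poly_funs_in S" by (simp_all add: zero_fun_def one_fun_def)
  moreover have "- p = (\<lambda>z. -1) * p" for p :: "complex ^ 'a \<Rightarrow> complex" by (rule ext) simp
  ultimately show ?thesis by (auto simp: subring_set_def intro: poly_funs_in.add poly_funs_in.mult)
qed

lemma poly_funs_in_mono: "p \<in> poly_funs_in S \<Longrightarrow> S \<subseteq> T \<Longrightarrow> p \<in> poly_funs_in T"
  by (induction rule: poly_funs_in.induct) (auto intro: poly_funs_in.intros)

lemma poly_funs_eq: "poly_funs = poly_funs_in UNIV"
proof
  show "poly_funs \<subseteq> poly_funs_in UNIV"
  proof
    fix p assume "p \<in> poly_funs"
    then show "p \<in> poly_funs_in UNIV"
      by (induction rule: poly_funs.induct)
         (auto intro: poly_funs_in.intros poly_funs_in.add[unfolded plus_fun_def]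
            poly_funs_in.mult[unfolded times_fun_def])
  qed
  show "poly_funs_in UNIV \<subseteq> poly_funs"
  proof
    fix p assume "p \<in> poly_funs_in UNIV"
    then show "p \<in> poly_funs"
      by (induction rule: poly_funs_in.induct)
         (auto intro: poly_funs.intros simp: plus_fun_def times_fun_def)
  qed
qed

lemma eval_coord_mem:
  assumes "p \<in> coeff_polys (poly_funs_in S)"
  shows "poly p (\<lambda>z. z $ y) \<in> poly_funs_in (insert y S)"
  using assms
proof (induction p)
  case (pCons a p)
  then have "a \<in> poly_funs_in (insert y S)" "poly p (\<lambda>z. z $ y) \<in> poly_funs_in (insert y S)"
    by (auto simp: coeff_polys_def coeff_pCons split: nat.splits intro: poly_funs_in_mono)
  moreover have "poly (pCons a p) (\<lambda>z. z $ y) = a + (\<lambda>z. z $ y) * poly p (\<lambda>z. z $ y)"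
    by (simp only: poly_pCons)
  moreover have "(\<lambda>z. z $ y) \<in> poly_funs_in (insert y S)" by (rule poly_funs_in.coord) simp
  ultimately show ?case by (metis poly_funs_in.add poly_funs_in.mult)
qed (use subring_poly_funs_in[of "insert y S"] in \<open>simp add: subring_set_def\<close>)

lemma eval_coord_onto:
  assumes "f \<in> poly_funs_in (insert y S)"
  shows "f \<in> (\<lambda>p. poly p (\<lambda>z. z $ y)) ` coeff_polys (poly_funs_in S)"
proof -
  have const_poly: "[:f:] \<in> coeff_polys (poly_funs_in S)" if "f \<in> poly_funs_in S" for f
    using that subring_poly_funs_in by (auto simp: coeff_polys_def coeff_pCons subring_set_def split: nat.splits)
  have RP: "subring_set (coeff_polys (poly_funs_in S))"
    by (rule subring_coeff_polys[OF subring_poly_funs_in])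
  show ?thesis
    using assms
  proof (induction rule: poly_funs_in.induct)
    case (const c)
    show ?case using const_poly[OF poly_funs_in.const] by (intro image_eqI[where x="[:\<lambda>z. c:]"]) auto
  next
    case (coord i)
    show ?case
    proof (cases "i = y")
      case True
      have "monom 1 1 \<in> coeff_polys (poly_funs_in S)"
        using subring_poly_funs_in by (intro monom_coeff_polys) (auto simp: subring_set_def)
      then show ?thesis using True by (intro image_eqI[where x="monom 1 1"]) (auto simp: poly_monom)
    next
      case False
      then show ?thesis using coord const_poly[OF poly_funs_in.coord]
        by (intro image_eqI[where x="[:\<lambda>z. z $ i:]"]) auto
    qed
  next
    case (add p q)
    then obtain p' q' where "p' \<in> coeff_polys (poly_funs_in S)" "q' \<in> coeff_polys (poly_funs_in S)"
      "p = poly p' (\<lambda>z. z $ y)" "q = poly q' (\<lambda>z. z $ y)" by blast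
    then show ?case using RP unfolding subring_set_def
      by (intro image_eqI[where x="p' + q'"]) (simp add: poly_add, blast)
  next
    case (mult p q)
    then obtain p' q' where "p' \<in> coeff_polys (poly_funs_in S)" "q' \<in> coeff_polys (poly_funs_in S)"
      "p = poly p' (\<lambda>z. z $ y)" "q = poly q' (\<lambda>z. z $ y)" by blast
    then show ?case using RP unfolding subring_set_def
      by (intro image_eqI[where x="p' * q'"]) (simp add: poly_mult, blast)
  qed
qed

lemma eval_coord_image:
  "(\<lambda>p. poly p (\<lambda>z. z $ y)) ` coeff_polys (poly_funs_in S) = poly_funs_in (insert y S)"
  using eval_coord_mem eval_coord_onto by blast

lemma noetherian_constants: "noetherian_subring (poly_funs_in {})"
proof (rule noetherian_if_field[OF subring_poly_funs_in])
  have const: "\<exists>c. p = (\<lambda>z. c)" if "p \<in> poly_funs_in {}" for p :: "complex ^ 'a \<Rightarrow> complex"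
    using that by (induction rule: poly_funs_in.induct) (auto simp: plus_fun_def times_fun_def)
  fix p :: "complex ^ 'a \<Rightarrow> complex" assume "p \<in> poly_funs_in {}" "p \<noteq> 0"
  then obtain c where "p = (\<lambda>z. c)" "c \<noteq> 0" using const by (auto simp: zero_fun_def)
  then show "\<exists>q\<in>poly_funs_in {}. q * p = 1"
    by (intro bexI[where x="\<lambda>z. 1 / c"] poly_funs_in.const) (auto simp: one_fun_def)
qed

text \<open>Hilbert's basis theorem for the polynomial functions on C^g, by induction on the
  set of coordinates used.\<close>
lemma noetherian_poly_funs: "noetherian_subring (poly_funs :: (complex ^ ('g::finite) \<Rightarrow> complex) set)"
proof -
  have "noetherian_subring (poly_funs_in S)" if "finite S" for S :: "'g set"
    using that
  proof (induction rule: finite_induct)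
    case (insert y S)
    show ?case
      using hilbert_basis[OF insert.IH subring_poly_funs_in] subring_coeff_polys[OF subring_poly_funs_in]
      by (rule noetherian_hom_image[where h="\<lambda>p. poly p (\<lambda>z. z $ y)"]) (simp_all add: poly_add poly_mult eval_coord_image)
  qed (rule noetherian_constants)
  then show ?thesis by (simp add: poly_funs_eq)
qed

lemma subring_poly_funs: "subring_set poly_funs"
  by (simp add: poly_funs_eq subring_poly_funs_in)

lemma vanishing_ideal: "ideal_of poly_funs {f \<in> poly_funs. \<forall>z\<in>A. f z = 0}"
  using subring_poly_funs by (auto simp: ideal_of_def subring_set_def)

section \<open>Zariski density on irreducible curves\<close>

lemma chain_vanishing_ideal:
  fixes V :: "nat \<Rightarrow> (complex ^ ('g::finite)) set"
  assumes Vmono: "\<And>k l. k \<le> l \<Longrightarrow> V l \<subseteq> V k"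
  shows "ideal_of poly_funs {f \<in> poly_funs. \<exists>k. \<forall>z\<in>V k. f z = 0}" (is "ideal_of _ ?I")
  unfolding ideal_of_def
proof (intro conjI ballI)
  fix f g assume "f \<in> ?I" "g \<in> ?I"
  then obtain k l where "f \<in> poly_funs" "\<forall>z\<in>V k. f z = 0" "g \<in> poly_funs" "\<forall>z\<in>V l. g z = 0"
    by auto
  moreover have "V (max k l) \<subseteq> V k" "V (max k l) \<subseteq> V l" by (simp_all add: Vmono)
  ultimately have "f + g \<in> poly_funs" "\<forall>z\<in>V (max k l). (f + g) z = 0"
    using subring_poly_funs by (auto simp: subring_set_def subset_iff)
  then show "f + g \<in> ?I" by blast
next
  show "?I \<subseteq> poly_funs" by auto
  show "0 \<in> ?I" using subring_poly_funs by (auto simp: subring_set_def)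
next
  fix h f :: "complex ^ 'g \<Rightarrow> complex" assume "h \<in> poly_funs" "f \<in> ?I"
  then show "h * f \<in> ?I" using subring_poly_funs by (auto simp: subring_set_def)
qed

text \<open>Descending chain condition for algebraic sets: the vanishing ideals of a strictly decreasing
  chain would form a strictly increasing chain of ideals, which Hilbert's basis theorem forbids.\<close>
lemma algebraic_set_dcc:
  "wf {(A :: (complex ^ ('g::finite)) set, B). algebraic_set A \<and> algebraic_set B \<and> A \<subset> B}"
proof (rule ccontr)
  assume "\<not> ?thesis"
  then obtain V :: "nat \<Rightarrow> (complex ^ 'g) set"
    where "\<forall>k. (V (Suc k), V k) \<in> {(A, B). algebraic_set A \<and> algebraic_set B \<and> A \<subset> B}"
    unfolding wf_iff_no_infinite_down_chain by blast
  then have V: "\<And>k. algebraic_set (V (Suc k)) \<and> V (Suc k) \<subset> V k" by simp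
  have Vmono: "V l \<subseteq> V k" if "k \<le> l" for k l
    using lift_Suc_antimono_le[of V] V that by blast
  define I where "I = {f \<in> poly_funs. \<exists>k. \<forall>z\<in>V k. f z = 0}"
  have "ideal_of poly_funs I" unfolding I_def by (rule chain_vanishing_ideal[OF Vmono])
  then obtain F where F: "finite F" "F \<subseteq> I" "I \<subseteq> ideal_span poly_funs F"
    using noetherian_poly_funs unfolding noetherian_subring_def by blast
  have "\<forall>f\<in>F. \<exists>k. \<forall>z\<in>V k. f z = 0" using F(2) by (auto simp: I_def)
  then obtain kk where kk: "\<forall>f\<in>F. \<forall>z\<in>V (kk f). f z = 0" by metis
  define m where "m = Max (insert 0 (kk ` F))"
  have "F \<subseteq> {f \<in> poly_funs. \<forall>z\<in>V m. f z = 0}"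
  proof
    fix f assume "f \<in> F"
    then have "kk f \<le> m" unfolding m_def using F(1) by (auto intro: Max_ge)
    then show "f \<in> {f \<in> poly_funs. \<forall>z\<in>V m. f z = 0}"
      using kk \<open>f \<in> F\<close> F(2) Vmono[OF \<open>kk f \<le> m\<close>] by (auto simp: I_def subset_iff)
  qed
  then have Im: "I \<subseteq> {f \<in> poly_funs. \<forall>z\<in>V m. f z = 0}"
    using F(3) ideal_span_subset[OF vanishing_ideal] by blast
  obtain F' where F': "F' \<subseteq> poly_funs" "V (Suc m) = {z. \<forall>f\<in>F'. f z = 0}"
    using V[of m] unfolding algebraic_set_def by blast
  have "F' \<subseteq> I" using F' by (auto simp: I_def)
  then have "V m \<subseteq> V (Suc m)" using Im F'(2) by blast
  then show False using V[of m] by blast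
qed

lemma singleton_irreducible: "irreducible_alg {m :: complex ^ ('g::finite)}"
proof -
  have coord: "(\<lambda>z. z $ j - m $ j) \<in> poly_funs" for j
    using poly_funs.pf_add[OF poly_funs.pf_coord poly_funs.pf_const, of j "- m $ j"] by simp
  have "algebraic_set {m}"
    unfolding algebraic_set_def using coord
    by (intro exI[where x="range (\<lambda>j. (\<lambda>z. z $ j - m $ j))"]) (auto simp: vec_eq_iff)
  moreover have "\<not> (\<exists>A1 A2. algebraic_set A1 \<and> algebraic_set A2 \<and> {m} = A1 \<union> A2 \<and> A1 \<noteq> {m} \<and> A2 \<noteq> {m})"
    by (metis Un_empty subset_singleton_iff sup_ge1 sup_ge2)
  ultimately show ?thesis unfolding irreducible_alg_def by simp
qed

text \<open>An infinite algebraic set contains an infinite irreducible algebraic subset: take a minimal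
  infinite algebraic subset, which exists by the descending chain condition.\<close>
lemma infinite_irreducible_subset:
  assumes "algebraic_set (A :: (complex ^ ('g::finite)) set)" "infinite A"
  obtains M where "irreducible_alg M" "M \<subseteq> A" "infinite M"
proof -
  define Q where "Q = {M. algebraic_set M \<and> M \<subseteq> A \<and> infinite M}"
  have "A \<in> Q" using assms by (auto simp: Q_def)
  then obtain M where M: "M \<in> Q"
    and min0: "\<And>Y. (Y, M) \<in> {(A, B). algebraic_set A \<and> algebraic_set B \<and> A \<subset> B} \<Longrightarrow> Y \<notin> Q"
    using wfE_min[OF algebraic_set_dcc \<open>A \<in> Q\<close>] by blast
  have min: "Y \<notin> Q" if "algebraic_set Y" "Y \<subset> M" for Y
    using min0[of Y] that M by (auto simp: Q_def)
  have "irreducible_alg M"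
    unfolding irreducible_alg_def
  proof (intro conjI)
    show "M \<noteq> {}" "algebraic_set M" using M by (auto simp: Q_def)
    show "\<not> (\<exists>A1 A2. algebraic_set A1 \<and> algebraic_set A2 \<and> M = A1 \<union> A2 \<and> A1 \<noteq> M \<and> A2 \<noteq> M)"
    proof
    assume "\<exists>A1 A2. algebraic_set A1 \<and> algebraic_set A2 \<and> M = A1 \<union> A2 \<and> A1 \<noteq> M \<and> A2 \<noteq> M"
    then obtain A1 A2 where A12: "algebraic_set A1" "algebraic_set A2" "M = A1 \<union> A2" "A1 \<noteq> M" "A2 \<noteq> M"
      by blast
    then have "A1 \<subset> M" "A2 \<subset> M" by auto
    then have "A1 \<notin> Q" "A2 \<notin> Q" using min A12(1,2) by blast+
    then have "finite A1" "finite A2" using A12 M by (auto simp: Q_def)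
    then show False using A12(3) M by (auto simp: Q_def)
    qed
  qed
  then show ?thesis using that M by (auto simp: Q_def)
qed

text \<open>Every infinite subset of an irreducible curve is Zariski dense in it: otherwise a polynomial
  cuts out a proper algebraic subset containing an infinite irreducible piece, which together
  with a point below it would give a chain of length two.\<close>
lemma curve_zariski_dense:
  fixes C S :: "(complex ^ ('g::finite)) set"
  assumes C: "irreducible_curve C" and SC: "S \<subseteq> C" and S: "infinite S"
  shows "C \<subseteq> zariski_closure S"
proof
  fix z assume zC: "z \<in> C"
  show "z \<in> zariski_closure S"
    unfolding zariski_closure_def
  proof (intro CollectI ballI impI)
    fix p assume p: "p \<in> poly_funs" "\<forall>s\<in>S. p s = 0"
    show "p z = 0"
    proof (rule ccontr)
    assume pz: "p z \<noteq> 0"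
    have "algebraic_set C" using C by (simp add: irreducible_curve_def irreducible_alg_def)
    then obtain F where F: "finite F" "F \<subseteq> poly_funs" "C = {x. \<forall>f\<in>F. f x = 0}"
      unfolding algebraic_set_def by blast
    define A where "A = {x. \<forall>f\<in>insert p F. f x = 0}"
    have "algebraic_set A" unfolding algebraic_set_def A_def using F p by blast
    moreover have "S \<subseteq> A" using SC p(2) F(3) by (auto simp: A_def)
    then have "infinite A" using S by (rule infinite_super)
    ultimately obtain M where M: "irreducible_alg M" "M \<subseteq> A" "infinite M"
      by (rule infinite_irreducible_subset)
    have "M \<subset> C" using M(2) zC pz F(3) by (auto simp: A_def)
    moreover obtain x where "x \<in> M" using M(3) by (metis finite.emptyI ex_in_conv)
    then have "{x} \<subset> M" using M(3) by auto
    ultimately have "irreducible_alg M \<and> M \<subset> C \<and> irreducible_alg {x} \<and> {x} \<subset> M"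
      using M(1) singleton_irreducible by blast
    moreover have "\<forall>Y. irreducible_alg Y \<and> Y \<subset> C \<longrightarrow> \<not> (\<exists>W. irreducible_alg W \<and> W \<subset> Y)"
      using C by (simp add: irreducible_curve_def)
    ultimately show False by blast
    qed
  qed
qed

section \<open>Linear Puiseux series along rays\<close>

lemma ray_powr:
  fixes w :: complex and x :: real
  assumes "0 < x" "w \<noteq> 0"
  shows "(of_real x * w) powr (1 / of_nat N) = of_real (x powr (1 / real N)) * w powr (1 / of_nat N)"
proof -
  have "of_real x * w \<noteq> 0" using assms by simp
  then have "(of_real x * w) powr (1 / of_nat N) = exp ((1 / of_nat N) * Ln (of_real x * w))"
    by (simp add: powr_def)
  also have "Ln (of_real x * w) = of_real (ln x) + Ln w" using assms by (simp add: Ln_times_of_real Ln_of_real)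
  also have "(1 / of_nat N) * (of_real (ln x) + Ln w) = of_real (ln x / real N) + (1 / of_nat N) * Ln w"
    by (simp add: distrib_left)
  also have "exp (of_real (ln x / real N) + (1 / of_nat N) * Ln w) =
      exp (of_real (ln x / real N)) * exp ((1 / of_nat N) * Ln w)"
    by (simp add: exp_add)
  also have "exp (of_real (ln x / real N)) = (of_real (x powr (1 / real N)) :: complex)"
    using assms by (simp only: exp_of_real) (simp add: powr_def)
  also have "exp ((1 / of_nat N) * Ln w) = w powr (1 / of_nat N)" using assms by (simp add: powr_def)
  finally show ?thesis .
qed

lemma cpow_N:
  fixes w :: complex
  assumes "0 < N" "w \<noteq> 0"
  shows "(w powr (1 / of_nat N)) ^ N = w"
proof -
  have "(w powr (1 / of_nat N)) ^ N = exp ((1 / of_nat N) * Ln w) ^ N"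
    using assms by (simp add: powr_def)
  also have "\<dots> = exp (of_nat N * ((1 / of_nat N) * Ln w))"
    by (rule exp_of_nat_mult[symmetric])
  also have "of_nat N * ((1 / of_nat N) * Ln w) = Ln w" using assms by simp
  finally show ?thesis using assms by simp
qed

lemma rpow_N:
  fixes x :: real
  assumes "0 < N" "0 < x"
  shows "(x powr (1 / real N)) ^ N = x"
  using assms by (simp add: powr_realpow[symmetric] powr_powr)

lemma rpow_k:
  fixes x :: real
  assumes "0 < x"
  shows "(x powr (1 / real N)) ^ k = x powr (real k / real N)"
  using assms by (simp add: powr_realpow[symmetric] powr_powr)

lemma diff_powr_tendsto:
  fixes p n :: real
  assumes "0 \<le> p" "p < 1" "0 \<le> n"
  shows "((\<lambda>x. (x + n) powr p - x powr p) \<longlongrightarrow> 0) at_top"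
proof (rule Lim_null_comparison)
  show "\<forall>\<^sub>F x in at_top. norm ((x + n) powr p - x powr p) \<le> n * x powr (p - 1)"
    using eventually_gt_at_top[of 0]
  proof eventually_elim
    case (elim x)
    have e: "x * (1 + n / x) = x + n" using elim by (simp add: field_simps)
    have "(x * (1 + n / x)) powr p = x powr p * (1 + n / x) powr p"
      using elim assms by (simp add: powr_mult)
    then have "(x + n) powr p = x powr p * (1 + n / x) powr p" using e by simp
    also have "(1 + n / x) powr p \<le> (1 + n / x) powr 1"
      using assms elim by (intro powr_mono) auto
    also have "\<dots> = 1 + n / x" using assms elim by simp
    finally have "(x + n) powr p \<le> x powr p * (1 + n / x)" using elim by simp
    also have "\<dots> = x powr p + n * x powr (p - 1)"
      using elim by (simp add: powr_diff field_simps)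
    finally have u: "(x + n) powr p - x powr p \<le> n * x powr (p - 1)" by simp
    have l: "x powr p \<le> (x + n) powr p" using assms elim by (intro powr_mono2) auto
    show ?case using u l by simp
  qed
  show "((\<lambda>x. n * x powr (p - 1)) \<longlongrightarrow> 0) at_top"
    using assms by (intro tendsto_mult_right_zero tendsto_neg_powr filterlim_ident) auto
qed

lemma neg_power_decay:
  fixes c :: complex and k :: int
  assumes k: "k < 0" and \<rho>: "0 < \<rho>1" "\<rho>1 \<le> \<rho>"
  shows "norm ((of_real \<rho> * c) powi k) \<le> \<rho>1 / \<rho> * norm ((of_real \<rho>1 * c) powi k)"
proof -
  define q where "q = \<rho> / \<rho>1"
  have q1: "1 \<le> q" using \<rho> by (simp add: q_def field_simps)
  have "q powi k \<le> q powi (-1)" using k by (intro power_int_increasing q1) simp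
  also have "q powi (-1) = \<rho>1 / \<rho>" by (simp add: q_def)
  finally have qk: "q powi k \<le> \<rho>1 / \<rho>" .
  have "norm (of_real \<rho> * c) = (\<rho>1 * norm c) * q"
    using \<rho> by (simp add: q_def norm_mult field_simps)
  then have "norm ((of_real \<rho> * c) powi k) = ((\<rho>1 * norm c) * q) powi k"
    by (simp only: norm_power_int)
  also have "\<dots> = (\<rho>1 * norm c) powi k * q powi k"
    by (rule power_int_mult_distrib)
  also have "\<dots> \<le> (\<rho>1 * norm c) powi k * (\<rho>1 / \<rho>)"
    using qk \<rho> by (intro mult_left_mono) auto
  also have "\<dots> = \<rho>1 / \<rho> * norm ((of_real \<rho>1 * c) powi k)"
    using \<rho> by (simp add: norm_mult norm_power_int)
  finally show ?thesis .
qed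

lemma neg_tail_tendsto:
  fixes b :: "int \<Rightarrow> complex" and c :: complex and R :: real
  assumes summ: "\<forall>s. R < norm s ^ N \<longrightarrow> (\<lambda>k. b k * s powi k) summable_on UNIV"
    and c: "c \<noteq> 0" and N: "0 < N"
  shows "((\<lambda>\<rho>. infsum (\<lambda>k. b k * (of_real \<rho> * c) powi k) {..<0}) \<longlongrightarrow> 0) at_top"
proof -
  define \<rho>1 where "\<rho>1 = max 1 ((\<bar>R\<bar> + 1) / norm c ^ N)"
  have r1: "1 \<le> \<rho>1" by (simp add: \<rho>1_def)
  have abs_summ: "(\<lambda>k. norm (b k * (of_real \<rho> * c) powi k)) summable_on {..<0}" if "\<rho>1 \<le> \<rho>" for \<rho>
  proof -
    have "\<rho>1 \<le> \<rho>1 ^ N" using r1 N by (simp add: power_increasing[of 1 N \<rho>1, simplified])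
    also have "\<dots> \<le> \<rho> ^ N" using r1 that by (intro power_mono) auto
    finally have "\<bar>R\<bar> + 1 \<le> \<rho> ^ N * norm c ^ N" using c by (simp add: \<rho>1_def field_simps)
    then have "R < norm (of_real \<rho> * c) ^ N"
      using r1 that by (simp add: norm_mult power_mult_distrib)
    then have "(\<lambda>k. norm (b k * (of_real \<rho> * c) powi k)) summable_on UNIV"
      using summ by (simp add: summable_on_iff_abs_summable_on_complex)
    then show ?thesis by (rule summable_on_subset_banach) auto
  qed
  define M where "M = infsum (\<lambda>k. norm (b k * (of_real \<rho>1 * c) powi k)) {..<0}"
  show ?thesis
  proof (rule Lim_null_comparison)
    show "\<forall>\<^sub>F \<rho> in at_top. norm (infsum (\<lambda>k. b k * (of_real \<rho> * c) powi k) {..<0}) \<le> \<rho>1 / \<rho> * M"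
      using eventually_ge_at_top[of \<rho>1]
    proof eventually_elim
      case (elim \<rho>)
      have "norm (infsum (\<lambda>k. b k * (of_real \<rho> * c) powi k) {..<0})
          \<le> infsum (\<lambda>k. norm (b k * (of_real \<rho> * c) powi k)) {..<0}"
        by (rule norm_infsum_bound[OF abs_summ[OF elim]])
      also have "\<dots> \<le> infsum (\<lambda>k. \<rho>1 / \<rho> * norm (b k * (of_real \<rho>1 * c) powi k)) {..<0}"
      proof (rule infsum_mono[OF abs_summ[OF elim] summable_on_cmult_right[OF abs_summ[OF order.refl]]])
        fix k :: int assume "k \<in> {..<0}"
        then have "norm (b k) * norm ((of_real \<rho> * c) powi k)
            \<le> norm (b k) * (\<rho>1 / \<rho> * norm ((of_real \<rho>1 * c) powi k))"
          using neg_power_decay[of k \<rho>1 \<rho> c] r1 elim by (intro mult_left_mono) auto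
        then show "norm (b k * (of_real \<rho> * c) powi k) \<le> \<rho>1 / \<rho> * norm (b k * (of_real \<rho>1 * c) powi k)"
          by (simp add: norm_mult mult_ac)
      qed
      also have "\<dots> = \<rho>1 / \<rho> * M"
        unfolding M_def by (rule infsum_cmult_right) (use abs_summ[OF order.refl] in auto)
      finally show ?case .
    qed
    show "((\<lambda>\<rho>. \<rho>1 / \<rho> * M) \<longlongrightarrow> 0) at_top"
      by real_asymp
  qed
qed

lemma linear_puiseux_on_ray:
  fixes b :: "int \<Rightarrow> complex" and w c :: complex and x R :: real
  assumes summ: "\<forall>s. R < norm s ^ N \<longrightarrow> (\<lambda>k. b k * s powi k) summable_on UNIV"
    and bN: "\<forall>k. int N < k \<longrightarrow> b k = 0" and N: "0 < N" and w: "w \<noteq> 0"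
    and x: "0 < x" "R < x * norm w" and c: "c = w powr (1 / of_nat N)"
  shows "puiseux_val N b (of_real x * w) =
     infsum (\<lambda>k. b k * (of_real (x powr (1 / real N)) * c) powi k) {..<0}
     + (\<Sum>m<N. b (int m) * c ^ m * of_real (x powr (real m / real N))) + b (int N) * w * of_real x"
proof -
  define \<rho> where "\<rho> = x powr (1 / real N)"
  define f where "f = (\<lambda>k. b k * (of_real \<rho> * c) powi k)"
  have cN: "c ^ N = w" unfolding c by (rule cpow_N[OF N w])
  have "norm (of_real \<rho> * c) ^ N = x * norm w"
    using rpow_N[OF N x(1)] cN by (simp add: \<rho>_def norm_mult power_mult_distrib flip: norm_power)
  then have fs: "f summable_on UNIV" using summ x(2) by (simp add: f_def)
  have "infsum f UNIV = infsum f {..<0} + (infsum f {0..int N} + infsum f {int N<..})"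
  proof -
    have U: "(UNIV :: int set) = {..<0} \<union> ({0..int N} \<union> {int N<..})" by auto
    have s: "f summable_on A" for A by (rule summable_on_subset_banach[OF fs]) auto
    have "infsum f UNIV = infsum f ({..<0} \<union> ({0..int N} \<union> {int N<..}))" by (simp only: U[symmetric])
    also have "\<dots> = infsum f {..<0} + infsum f ({0..int N} \<union> {int N<..})"
      by (rule infsum_Un_disjoint[OF s s]) auto
    also have "infsum f ({0..int N} \<union> {int N<..}) = infsum f {0..int N} + infsum f {int N<..}"
      by (rule infsum_Un_disjoint[OF s s]) auto
    finally show ?thesis .
  qed
  also have "infsum f {int N<..} = 0" using bN by (intro infsum_0) (auto simp: f_def)
  also have "infsum f {0..int N} = (\<Sum>m<Suc N. f (int m))"
  proof -
    have "{0..int N} = int ` {0..N}" by (simp add: image_int_atLeastAtMost)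
    then show ?thesis by (simp add: sum.reindex atLeast0AtMost lessThan_Suc_atMost)
  qed
  also have "\<dots> = (\<Sum>m<N. b (int m) * c ^ m * of_real (x powr (real m / real N))) + b (int N) * w * of_real x"
  proof -
    have rp: "complex_of_real \<rho> ^ m = of_real (x powr (real m / real N))" for m
      by (simp add: \<rho>_def rpow_k[OF x(1)] flip: of_real_power)
    have "complex_of_real \<rho> ^ N = of_real x"
      using rpow_N[OF N x(1)] by (simp add: \<rho>_def flip: of_real_power)
    then show ?thesis by (simp add: f_def power_mult_distrib rp cN mult_ac)
  qed
  finally show ?thesis
    using x(1) w by (simp add: puiseux_val_def ray_powr c f_def \<rho>_def)
qed

lemma linear_puiseux_ray_increment:
  fixes b :: "int \<Rightarrow> complex" and w :: complex and R :: real and n :: nat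
  assumes summ: "\<forall>s. R < norm s ^ N \<longrightarrow> (\<lambda>k. b k * s powi k) summable_on UNIV"
    and bN: "\<forall>k. int N < k \<longrightarrow> b k = 0" and N: "0 < N" and w: "w \<noteq> 0"
  shows "((\<lambda>x. puiseux_val N b (of_real (x + real n) * w) - puiseux_val N b (of_real x * w)
             - of_nat n * w * b (int N)) \<longlongrightarrow> 0) at_top"
proof -
  define c where "c = w powr (1 / of_nat N)"
  have "c \<noteq> 0" using cpow_N[OF N w] N w by (auto simp: c_def)
  define tail where "tail \<rho> = infsum (\<lambda>k. b k * (of_real \<rho> * c) powi k) {..<0}" for \<rho>
  define frac where "frac x = (\<Sum>m<N. b (int m) * c ^ m * of_real (x powr (real m / real N)))" for x
  have tail: "(tail \<longlongrightarrow> 0) at_top" unfolding tail_def by (rule neg_tail_tendsto[OF summ \<open>c \<noteq> 0\<close> N])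
  have "((\<lambda>x. tail ((x + real n) powr (1 / real N)) - tail (x powr (1 / real N))) \<longlongrightarrow> 0 - 0) at_top"
    using N by (intro tendsto_diff filterlim_compose[OF tail] filterlim_compose[OF real_powr_at_top])
       (auto intro: filterlim_ident, real_asymp)
  moreover have "((\<lambda>x. frac (x + real n) - frac x) \<longlongrightarrow> 0) at_top"
  proof -
    have "((\<lambda>x. of_real ((x + real n) powr (real m / real N) - x powr (real m / real N)) :: complex)
        \<longlongrightarrow> of_real 0) at_top" if "m < N" for m
      using that by (intro tendsto_of_real diff_powr_tendsto) auto
    then have "((\<lambda>x. \<Sum>m<N. b (int m) * c ^ m *
        of_real ((x + real n) powr (real m / real N) - x powr (real m / real N))) \<longlongrightarrow> (\<Sum>m<N. 0)) at_top"
      by (intro tendsto_sum tendsto_mult_right_zero) (simp only: of_real_0 lessThan_iff)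
    then show ?thesis by (simp add: frac_def algebra_simps sum_subtractf[symmetric])
  qed
  ultimately have "((\<lambda>x. (tail ((x + real n) powr (1 / real N)) - tail (x powr (1 / real N)))
      + (frac (x + real n) - frac x)) \<longlongrightarrow> 0) at_top"
    using tendsto_add by fastforce
  moreover have "\<forall>\<^sub>F x in at_top. (tail ((x + real n) powr (1 / real N)) - tail (x powr (1 / real N)))
      + (frac (x + real n) - frac x) = puiseux_val N b (of_real (x + real n) * w)
        - puiseux_val N b (of_real x * w) - of_nat n * w * b (int N)"
    using eventually_gt_at_top[of "max 0 (R / norm w)"]
  proof eventually_elim
    case (elim x)
    have xR: "R < x * norm w" using elim w by (simp add: field_simps)
    moreover have "x * norm w \<le> (x + real n) * norm w" by (intro mult_right_mono) auto
    ultimately have "R < (x + real n) * norm w" by linarith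
    then show ?case using elim xR
      linear_puiseux_on_ray[OF summ bN N w _ _ c_def, of x]
      linear_puiseux_on_ray[OF summ bN N w _ _ c_def, of "x + real n"]
      by (simp add: tail_def frac_def algebra_simps)
  qed
  ultimately show ?thesis by (rule Lim_transform_eventually)
qed

section \<open>Periodic sets, lattices and branches\<close>

lemma norm_smult_cvec: "norm (c *s (x :: complex ^ 'n)) = norm c * norm x"
proof -
  have "norm (c *s x) = L2_set (\<lambda>i. norm c * norm (x $ i)) UNIV"
    by (simp add: norm_vec_def norm_mult)
  also have "\<dots> = norm c * L2_set (\<lambda>i. norm (x $ i)) UNIV"
    by (rule L2_set_right_distrib[symmetric]) simp
  finally show ?thesis by (simp add: norm_vec_def)
qed

lemma periodic_int_multiple:
  assumes L: "is_lattice (L :: (complex ^ 'g) set)" and Z: "periodic_set L Z"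
    and lam: "lam \<in> L" and z: "z \<in> Z"
  shows "z + (of_int k :: complex) *s lam \<in> Z"
proof -
  obtain V where V: "L = {\<Sum>v\<in>V. real_of_int (n v) *\<^sub>R v | n. True}"
    using L unfolding is_lattice_def by blast
  then obtain n where n: "lam = (\<Sum>v\<in>V. real_of_int (n v) *\<^sub>R v)" using lam by blast
  have "(of_int k :: complex) *s x = real_of_int k *\<^sub>R x" for x :: "complex ^ 'g"
    unfolding vec_eq_iff vector_smult_component vector_scaleR_component by (simp add: scaleR_conv_of_real)
  then have "(of_int k :: complex) *s lam = (\<Sum>v\<in>V. real_of_int (k * n v) *\<^sub>R v)"
    by (simp add: n scaleR_sum_right)
  then have "(of_int k :: complex) *s lam \<in> L" unfolding V by (intro CollectI exI[where x="\<lambda>v. k * n v"]) simp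
  then show ?thesis using Z z unfolding periodic_set_def by blast
qed

lemma uncountable_ball:
  fixes A :: "'a::{metric_space, second_countable_topology} set"
  assumes "uncountable A"
  obtains d where "infinite (A \<inter> ball d 1)"
proof (rule ccontr)
  assume "\<not> thesis"
  then have fin: "\<And>d. finite (A \<inter> ball d 1)" using that by blast
  obtain D :: "'a set" where D: "countable D" "\<And>X. open X \<Longrightarrow> X \<noteq> {} \<Longrightarrow> \<exists>d\<in>D. d \<in> X"
    using countable_dense_setE by blast
  have "A \<subseteq> (\<Union>d\<in>D. A \<inter> ball d 1)"
  proof
    fix x assume "x \<in> A"
    obtain d where "d \<in> D" "d \<in> ball x 1" using D(2)[of "ball x 1"] by auto
    then show "x \<in> (\<Union>d\<in>D. A \<inter> ball d 1)" using \<open>x \<in> A\<close> by (auto simp: dist_commute)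
  qed
  moreover have "countable (\<Union>d\<in>D. A \<inter> ball d 1)"
    using D(1) fin by (intro countable_UN) (auto intro: countable_finite)
  ultimately show False using assms countable_subset by blast
qed

lemma branch_ray_increment:
  assumes br: "is_branch C i N a R" and lin: "linear_branch N a" and w: "w \<noteq> 0"
  shows "((\<lambda>x. branch_fun N a (of_real (x + real n) * w) - branch_fun N a (of_real x * w)
            - (of_nat n * w) *s branch_direction N a) \<longlongrightarrow> 0) at_top"
proof (rule vec_tendstoI)
  fix j
  have "\<forall>s. R < norm s ^ N \<longrightarrow> (\<lambda>k. a j k * s powi k) summable_on UNIV" "0 < N"
    using br by (auto simp: is_branch_def)
  moreover have "\<forall>k. int N < k \<longrightarrow> a j k = 0" using lin by (simp add: linear_branch_def)
  ultimately show "((\<lambda>x. (branch_fun N a (of_real (x + real n) * w) - branch_fun N a (of_real x * w)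
      - (of_nat n * w) *s branch_direction N a) $ j) \<longlongrightarrow> 0 $ j) at_top"
    using linear_puiseux_ray_increment[of R N "a j" w n] w
    by (simp add: branch_fun_def branch_direction_def mult_ac)
qed

section \<open>The rigidity argument\<close>

definition K_rigid :: "nat \<Rightarrow> nat \<Rightarrow> ('g::finite \<Rightarrow> int \<Rightarrow> complex) \<Rightarrow> real \<Rightarrow> (complex ^ 'g) set \<Rightarrow> bool" where
  "K_rigid K N a R Z \<longleftrightarrow> (\<forall>c :: complex ^ 'g. \<forall>w0 w1 :: complex. \<forall>\<tau>' \<mu> :: complex ^ 'g.
           (let S = (\<lambda>x. x + \<tau>') ` Gamma_set N a R \<mu> w0 w1 \<inter> Z \<inter> ball c 1
            in infinite S \<or> K \<le> card S)
           \<longrightarrow> (\<lambda>x. x + \<tau>') ` Gamma_set N a R \<mu> w0 w1 \<subseteq> Z)"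

lemma K_rigidD:
  assumes rigid: "K_rigid K N a R Z"
    and P: "P \<subseteq> (\<lambda>x. x + \<tau>') ` Gamma_set N a R \<mu> w0 w1 \<inter> Z \<inter> ball c 1"
    and card: "infinite P \<or> K \<le> card P"
  shows "(\<lambda>x. x + \<tau>') ` Gamma_set N a R \<mu> w0 w1 \<subseteq> Z"
proof -
  define S where "S = (\<lambda>x. x + \<tau>') ` Gamma_set N a R \<mu> w0 w1 \<inter> Z \<inter> ball c 1"
  have "infinite S \<or> K \<le> card S"
  proof (cases "finite S")
    case True
    moreover have "P \<subseteq> S" using P by (simp add: S_def)
    ultimately have "finite P" "card P \<le> card S" by (auto intro: finite_subset card_mono)
    then show ?thesis using card by auto
  qed simp
  then show ?thesis using rigid unfolding K_rigid_def Let_def S_def by blast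
qed

lemma Gamma_set_points:
  "R < norm (w0 + \<kappa> * w1) \<Longrightarrow> branch_fun N a (w0 + \<kappa> * w1) - \<kappa> *s \<mu> \<in> Gamma_set N a R \<mu> w0 w1"
  unfolding Gamma_set_def zariski_closure_def by blast

text \<open>Rigidity for lines: with w_1 = 0 the set \<Gamma> is a line, so a line meeting
  Z in enough points of a unit ball lies in Z.\<close>
lemma K_rigid_line:
  assumes rigid: "K_rigid K N a R Z"
    and P: "P \<subseteq> {p + \<kappa> *s v | \<kappa>. True} \<inter> Z \<inter> ball c 1" and card: "infinite P \<or> K \<le> card P"
  shows "p + \<kappa> *s v \<in> Z"
proof -
  define w0 where "w0 = (of_real (\<bar>R\<bar> + 1) :: complex)"
  define \<tau>' where "\<tau>' = p - branch_fun N a w0"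
  have line: "{p + \<kappa> *s v | \<kappa>. True} \<subseteq> (\<lambda>x. x + \<tau>') ` Gamma_set N a R (- v) w0 0"
  proof
    fix y assume "y \<in> {p + \<kappa> *s v | \<kappa>. True}"
    then obtain \<kappa> where "y = p + \<kappa> *s v" by blast
    then have "y = (branch_fun N a (w0 + \<kappa> * 0) - \<kappa> *s (- v)) + \<tau>'"
      by (simp add: \<tau>'_def vector_smult_rneg)
    moreover have "R < norm (w0 + \<kappa> * 0)" by (simp add: w0_def)
    ultimately show "y \<in> (\<lambda>x. x + \<tau>') ` Gamma_set N a R (- v) w0 0"
      using Gamma_set_points by blast
  qed
  have "(\<lambda>x. x + \<tau>') ` Gamma_set N a R (- v) w0 0 \<subseteq> Z"
    by (rule K_rigidD[OF rigid _ card]) (use P line in blast)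
  then show ?thesis using line by blast
qed

lemma approx_avoiding:
  fixes \<alpha> lam :: "complex ^ 'n"
  assumes "norm (w0 *s \<alpha> - lam) < e" and X: "finite X"
  obtains w where "norm (w *s \<alpha> - lam) < e" "w \<notin> X"
proof -
  define d where "d = (e - norm (w0 *s \<alpha> - lam)) / (norm \<alpha> + 1)"
  have d0: "0 < d" unfolding d_def using assms(1) by (intro divide_pos_pos) (auto simp: add_nonneg_pos)
  have "infinite ((\<lambda>r::real. w0 + of_real r) ` {0<..<d})"
    using d0 by (subst finite_image_iff) (auto simp: inj_on_def)
  then have "\<not> (\<lambda>r::real. w0 + of_real r) ` {0<..<d} \<subseteq> X" using X finite_subset by blast
  then obtain r where "r \<in> {0<..<d}" "w0 + of_real r \<notin> X" unfolding image_subset_iff by blast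
  then have r: "0 < r" "r < d" "w0 + of_real r \<notin> X" by auto
  have "norm ((w0 + of_real r) *s \<alpha> - lam) \<le> norm (w0 *s \<alpha> - lam) + r * norm \<alpha>"
    using norm_triangle_ineq[of "w0 *s \<alpha> - lam" "of_real r *s \<alpha>"] r(1)
    by (simp add: norm_smult_cvec vector_sadd_rdistrib algebra_simps)
  moreover have "r * norm \<alpha> < e - norm (w0 *s \<alpha> - lam)"
  proof -
    have "r * norm \<alpha> \<le> d * norm \<alpha>" using r by (intro mult_right_mono) auto
    also have "\<dots> < d * (norm \<alpha> + 1)" using d0 by simp
    also have "\<dots> = e - norm (w0 *s \<alpha> - lam)"
      unfolding d_def by (smt (verit) norm_ge_zero nonzero_eq_divide_eq)
    finally show ?thesis .
  qed
  ultimately have "norm ((w0 + of_real r) *s \<alpha> - lam) < e" by linarith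
  then show ?thesis using that r(3) by blast
qed

lemma Gamma_ray_point:
  assumes x: "0 < x" "R < x * norm w"
  shows "R < norm (of_real (x + real n) * w)"
    and "branch_fun N a (of_real (x + real n) * w) - of_nat n *s lam \<in> Gamma_set N a R lam (of_real x * w) w"
proof -
  have "x * norm w \<le> (x + real n) * norm w" by (intro mult_right_mono) auto
  moreover have "norm (of_real (x + real n) * w) = (x + real n) * norm w"
    unfolding norm_mult norm_of_real using x(1) by simp
  ultimately show R: "R < norm (of_real (x + real n) * w)" using x by linarith
  have "of_real x * w + of_nat n * w = of_real (x + real n) * w" by (simp add: distrib_right)
  then show "branch_fun N a (of_real (x + real n) * w) - of_nat n *s lam \<in> Gamma_set N a R lam (of_real x * w) w"
    using Gamma_set_points[of R "of_real x * w" "of_nat n" w N a lam] R by simp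
qed

lemma drift_bound:
  fixes u v :: "complex ^ 'n"
  assumes "norm u < 1 / 2" "norm v < 1 / (2 * real K)" "n < K"
  shows "norm (u + of_nat n *s v) < 1"
proof -
  have "real n * norm v \<le> real K * (1 / (2 * real K))"
    using assms by (intro mult_mono) auto
  then have "real n * norm v \<le> 1 / 2" using assms(3) by simp
  moreover have "norm (u + of_nat n *s v) \<le> norm u + real n * norm v"
    by (metis norm_triangle_ineq norm_smult_cvec norm_of_nat)
  ultimately show ?thesis using assms(1) by linarith
qed

text \<open>The key step at a single ray parameter x: if \<phi>((x+n)w) - \<phi>(xw) is within 1/2 of n w \<alpha>
  for all n < K, then the translate \<Gamma>(\<phi>,\<lambda>,xw,w) + \<tau> lies in Z.  Its points
  q_n = \<phi>((x+n)w) - n\<lambda> + \<tau>, n < K, lie in Z (C + \<tau> \<subseteq> Z and Z is \<lambda>-periodic), are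
  distinct (their i-th coordinates differ as w \<noteq> \<lambda>_i), and lie within distance 1 of q_0.\<close>
lemma rigid_Gamma_at:
  assumes br: "is_branch C i N a R" and rigid: "K_rigid K N a R Z"
    and per: "\<And>z k. z \<in> Z \<Longrightarrow> z + (of_int k :: complex) *s lam \<in> Z"
    and tauC: "(\<lambda>c. c + \<tau>) ` C \<subseteq> Z"
    and w: "norm (w *s branch_direction N a - lam) < 1 / (2 * real K)" "w \<noteq> lam $ i"
    and x: "0 < x" "R < x * norm w"
    and close: "\<forall>n\<in>{..<K}. norm (branch_fun N a (of_real (x + real n) * w) - branch_fun N a (of_real x * w)
                  - (of_nat n * w) *s branch_direction N a) < 1/2"
  shows "(\<lambda>y. y + \<tau>) ` Gamma_set N a R lam (of_real x * w) w \<subseteq> Z"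
proof -
  define \<phi> where "\<phi> = branch_fun N a"
  define q where "q n = \<phi> (of_real (x + real n) * w) - of_nat n *s lam + \<tau>" for n :: nat
  have qG: "q n \<in> (\<lambda>y. y + \<tau>) ` Gamma_set N a R lam (of_real x * w) w" for n
    unfolding q_def \<phi>_def using Gamma_ray_point(2)[OF x] by blast
  have qZ: "q n \<in> Z" for n
  proof -
    have "\<phi> (of_real (x + real n) * w) + \<tau> \<in> Z"
      using tauC br Gamma_ray_point(1)[OF x] by (auto simp: is_branch_def \<phi>_def)
    from per[OF this, of "- int n"] show ?thesis
      by (simp add: q_def vector_smult_lneg algebra_simps)
  qed
  have qB: "q n \<in> ball (q 0) 1" if "n < K" for n
  proof -
    have eq: "q n - q 0 = (\<phi> (of_real (x + real n) * w) - \<phi> (of_real x * w) - (of_nat n * w) *s branch_direction N a)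
        + of_nat n *s (w *s branch_direction N a - lam)"
      by (simp add: q_def vector_ssub_ldistrib vector_smult_assoc algebra_simps)
    have "norm (\<phi> (of_real (x + real n) * w) - \<phi> (of_real x * w) - (of_nat n * w) *s branch_direction N a) < 1/2"
      using close that unfolding \<phi>_def by blast
    from drift_bound[OF this w(1) that] have "norm (q n - q 0) < 1" unfolding eq .
    then show ?thesis by (simp add: dist_norm norm_minus_commute)
  qed
  have "inj_on q {..<K}"
  proof
    fix n m assume "q n = q m"
    then have "q n $ i = q m $ i" by simp
    then have "(of_nat n - of_nat m) * (w - lam $ i) = 0"
      using br Gamma_ray_point(1)[OF x] by (simp add: q_def \<phi>_def is_branch_def algebra_simps)
    then show "n = m" using w(2) by simp
  qed
  then have "card (q ` {..<K}) = K" by (simp add: card_image)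
  then show ?thesis
    by (intro K_rigidD[OF rigid, where P="q ` {..<K}" and c="q 0"]) (use qG qZ qB in auto)
qed

text \<open>Since the linear branch moves like its direction along rays, the closeness hypothesis above
  holds for all large x.\<close>
lemma rigid_Gamma_along_ray:
  assumes br: "is_branch C i N a R" and lin: "linear_branch N a"
    and rigid: "K_rigid K N a R Z"
    and per: "\<And>z k. z \<in> Z \<Longrightarrow> z + (of_int k :: complex) *s lam \<in> Z"
    and tauC: "(\<lambda>c. c + \<tau>) ` C \<subseteq> Z"
    and w: "norm (w *s branch_direction N a - lam) < 1 / (2 * real K)" "w \<noteq> 0" "w \<noteq> lam $ i"
  shows "\<forall>\<^sub>F x in at_top. (\<lambda>y. y + \<tau>) ` Gamma_set N a R lam (of_real x * w) w \<subseteq> Z"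
proof -
  have "\<forall>\<^sub>F x in at_top. norm (branch_fun N a (of_real (x + real n) * w) - branch_fun N a (of_real x * w)
      - (of_nat n * w) *s branch_direction N a) < 1/2" for n :: nat
    using tendsto_iff[THEN iffD1, OF branch_ray_increment[OF br lin w(2), of n], rule_format, of "1/2"]
    by (simp add: dist_norm)
  then have "\<forall>\<^sub>F x in at_top. \<forall>n\<in>{..<K}. norm (branch_fun N a (of_real (x + real n) * w)
      - branch_fun N a (of_real x * w) - (of_nat n * w) *s branch_direction N a) < 1/2"
    by (intro eventually_ball_finite) auto
  then show ?thesis using eventually_gt_at_top[of "max 0 (R / norm w)"]
  proof eventually_elim
    case (elim x)
    have x: "0 < x" "R < x * norm w" using elim(2) w(2) by (auto simp: field_simps)
    show ?case by (rule rigid_Gamma_at[OF br rigid per tauC w(1,3) x elim(1)])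
  qed
qed

text \<open>Lines in direction lam through translated branch points: for every large x
  the point \<phi>(t) + \<tau> + (x - t/w) \<lambda> lies on the translate of
  \<Gamma>(\<phi>,\<lambda>,xw,w), hence in Z; these points fill a segment, so infinitely many
  lie in a unit ball and line rigidity applies.\<close>
lemma lines_through_branch:
  assumes rigid: "K_rigid K N a R Z" and w: "w \<noteq> 0" and lam: "lam \<noteq> 0"
    and ray: "\<forall>\<^sub>F x in at_top. (\<lambda>y. y + \<tau>) ` Gamma_set N a R lam (of_real x * w) w \<subseteq> Z"
    and t: "R < norm t"
  shows "branch_fun N a t + \<tau> + \<kappa> *s lam \<in> Z"
proof -
  obtain x0 where x0: "\<And>x. x0 \<le> x \<Longrightarrow> (\<lambda>y. y + \<tau>) ` Gamma_set N a R lam (of_real x * w) w \<subseteq> Z"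
    using ray unfolding eventually_at_top_linorder by blast
  define p where "p = branch_fun N a t + \<tau>"
  define f where "f x = p + (of_real x - t / w) *s lam" for x :: real
  have fZ: "f x \<in> Z" if "x0 \<le> x" for x
  proof -
    define k where "k = t / w - of_real x"
    have e: "of_real x * w + k * w = t" using w by (simp add: k_def field_simps)
    then have "branch_fun N a t - k *s lam \<in> Gamma_set N a R lam (of_real x * w) w"
      using Gamma_set_points[of R "of_real x * w" k w N a lam] t by simp
    then have "branch_fun N a t - k *s lam + \<tau> \<in> Z" using x0[OF that] by blast
    moreover have "branch_fun N a t - k *s lam + \<tau> = f x"
      by (simp add: f_def p_def k_def vector_sub_rdistrib algebra_simps)
    ultimately show ?thesis by simp
  qed
  define d where "d = 1 / (2 * norm lam)"
  have d: "0 < d" using lam by (simp add: d_def)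
  have "inj_on f {x0..<x0 + d}"
    using lam by (auto simp: inj_on_def f_def vector_sub_rdistrib algebra_simps)
  then have "infinite (f ` {x0..<x0 + d})" using d by (simp add: finite_image_iff)
  moreover have "f ` {x0..<x0 + d} \<subseteq> {p + \<kappa> *s lam | \<kappa>. True} \<inter> Z \<inter> ball (f x0) 1"
  proof
    fix y assume "y \<in> f ` {x0..<x0 + d}"
    then obtain x where x: "x0 \<le> x" "x < x0 + d" "y = f x" by auto
    have "f x0 - y = (of_real (x0 - x) :: complex) *s lam"
      by (simp add: x(3) f_def vector_sub_rdistrib algebra_simps)
    then have "dist (f x0) y = \<bar>x0 - x\<bar> * norm lam"
      by (simp only: dist_norm norm_smult_cvec norm_of_real)
    also have "\<dots> \<le> d * norm lam" using x by (intro mult_right_mono) auto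
    also have "\<dots> < 1" using lam by (simp add: d_def)
    finally have "y \<in> ball (f x0) 1" by simp
    moreover have "y \<in> {p + \<kappa> *s lam | \<kappa>. True}" unfolding x(3) f_def by blast
    ultimately show "y \<in> {p + \<kappa> *s lam | \<kappa>. True} \<inter> Z \<inter> ball (f x0) 1"
      using fZ[OF x(1)] x(3) by (intro IntI) simp_all
  qed
  ultimately show ?thesis using K_rigid_line[OF rigid] by (simp add: p_def)
qed

text \<open>A branch is injective (its i-th coordinate is the parameter), so its image is uncountable.\<close>
lemma branch_image_uncountable:
  assumes br: "is_branch C i N a R"
  shows "uncountable ((\<lambda>t. branch_fun N a t + v) ` {t. R < norm t})"
proof
  assume "countable ((\<lambda>t. branch_fun N a t + v) ` {t. R < norm t})"
  moreover have "inj_on (\<lambda>t. branch_fun N a t + v) {t. R < norm t}"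
    using br by (auto simp: inj_on_def is_branch_def dest: arg_cong[where f="\<lambda>z. z $ i"])
  ultimately have "countable {t :: complex. R < norm t}" by (rule countable_image_inj_on)
  moreover have "of_real ` {R<..<R + 1} \<subseteq> {t :: complex. R < norm t}" by auto
  ultimately have "countable {R<..<R + 1}"
    by (metis countable_image_inj_on countable_subset inj_of_real inj_on_subset subset_UNIV)
  then show False using uncountable_open_interval[of R "R + 1"] by simp
qed

text \<open>The image of a branch is an infinite subset of the irreducible curve, hence Zariski dense:
  the whole curve lies in \<Gamma>(\<phi>,0,0,1).\<close>
lemma curve_in_Gamma:
  assumes C: "irreducible_curve C" and br: "is_branch C i N a R"
  shows "C \<subseteq> Gamma_set N a R 0 0 1"
proof -
  have img: "{branch_fun N a (0 + \<kappa> * 1) - \<kappa> *s 0 | \<kappa>. R < norm (0 + \<kappa> * 1)}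
      = (\<lambda>t. branch_fun N a t + 0) ` {t. R < norm t}" by auto
  have "(\<lambda>t. branch_fun N a t + 0) ` {t. R < norm t} \<subseteq> C" using br by (auto simp: is_branch_def)
  moreover have "infinite ((\<lambda>t. branch_fun N a t + 0) ` {t. R < norm t})"
    using branch_image_uncountable[OF br] countable_finite by blast
  ultimately show ?thesis unfolding Gamma_set_def img by (rule curve_zariski_dense[OF C])
qed

text \<open>Final step: the translates \<phi>(t) + \<tau> + \<kappa>\<lambda> lie in Z and in the translate
  of \<Gamma>(\<phi>,0,0,1) \<supseteq> C; there are uncountably many, so rigidity moves the whole translate
  C + \<tau> + \<kappa>\<lambda> into Z.\<close>
lemma curve_translates_in_Z:
  assumes rigid: "K_rigid K N a R Z" and C: "irreducible_curve C" and br: "is_branch C i N a R"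
    and lines: "\<And>t \<kappa>. R < norm t \<Longrightarrow> branch_fun N a t + \<tau> + \<kappa> *s lam \<in> Z"
  shows "{c + \<tau> + \<kappa> *s lam | c \<kappa>. c \<in> C} \<subseteq> Z"
proof
  fix y assume "y \<in> {c + \<tau> + \<kappa> *s lam | c \<kappa>. c \<in> C}"
  then obtain c \<kappa> where y: "y = c + (\<tau> + \<kappa> *s lam)" "c \<in> C" by (auto simp: add.assoc)
  define A where "A = (\<lambda>t. branch_fun N a t + (\<tau> + \<kappa> *s lam)) ` {t. R < norm t}"
  obtain d where d: "infinite (A \<inter> ball d 1)"
    using uncountable_ball branch_image_uncountable[OF br] unfolding A_def by blast
  have "A \<subseteq> (\<lambda>x. x + (\<tau> + \<kappa> *s lam)) ` Gamma_set N a R 0 0 1"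
    using Gamma_set_points[of R 0 _ 1 N a 0] by (auto simp: A_def)
  moreover have "A \<subseteq> Z" using lines by (auto simp: A_def add.assoc)
  ultimately have "(\<lambda>x. x + (\<tau> + \<kappa> *s lam)) ` Gamma_set N a R 0 0 1 \<subseteq> Z"
    by (intro K_rigidD[OF rigid, where P="A \<inter> ball d 1" and c=d]) (use d in auto)
  then show "y \<in> Z" using curve_in_Gamma[OF C br] y by blast
qed

theorem proposition2p2:
  fixes L Z C :: "(complex ^ 'g) set" and \<tau> lam :: "complex ^ 'g"
    and i :: 'g and N :: nat and a :: "'g \<Rightarrow> int \<Rightarrow> complex" and R :: real and K :: nat
  assumes "is_lattice L"
    and "periodic_set L Z"
    and "analytic_set Z"
    and "irreducible_curve C"
    and "(\<lambda>c. c + \<tau>) ` C \<subseteq> Z"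
    and "is_branch C i N a R"
    and "linear_branch N a"
    and "0 < K"
    and "\<forall>c :: complex ^ 'g. \<forall>w0 w1 :: complex. \<forall>\<tau>' \<mu> :: complex ^ 'g.
           (let S = (\<lambda>x. x + \<tau>') ` Gamma_set N a R \<mu> w0 w1 \<inter> Z \<inter> ball c 1
            in infinite S \<or> K \<le> card S)
           \<longrightarrow> (\<lambda>x. x + \<tau>') ` Gamma_set N a R \<mu> w0 w1 \<subseteq> Z"
    and "lam \<in> L"
    and "\<exists>w::complex. norm (w *s branch_direction N a - lam) < 1 / (2 * real K)"
  shows "{c + \<tau> + w *s lam | c w. c \<in> C} \<subseteq> Z"
proof (cases "lam = 0")
  case True
  then show ?thesis using assms(5) by auto
next
  case False
  have rigid: "K_rigid K N a R Z" using assms(9) unfolding K_rigid_def .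
  obtain w where w: "norm (w *s branch_direction N a - lam) < 1 / (2 * real K)" "w \<notin> {0, lam $ i}"
    using assms(11) approx_avoiding[of _ "branch_direction N a" lam _ "{0, lam $ i}"] by blast
  have "\<forall>\<^sub>F x in at_top. (\<lambda>y. y + \<tau>) ` Gamma_set N a R lam (of_real x * w) w \<subseteq> Z"
    using w periodic_int_multiple[OF assms(1,2,10)]
    by (intro rigid_Gamma_along_ray[OF assms(6,7) rigid _ assms(5)]) auto
  then have "branch_fun N a t + \<tau> + \<kappa> *s lam \<in> Z" if "R < norm t" for t \<kappa>
    using lines_through_branch[OF rigid _ False _ that] w(2) by blast
  then show ?thesis by (rule curve_translates_in_Z[OF rigid assms(4,6)])
qed

end
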